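(* Let $0<\lambda\le\lambda_0$. Let $\boldsymbol\alpha_0^\star$ be the optimal solution of $\max_{\boldsymbol\alpha\ge\mathbf0}D_{\lambda_0}(\boldsymbol\alpha)$, and let $\boldsymbol\alpha_0\in\mathbb R^{2nK}_{\ge0}$ and $\epsilon\ge0$ satisfy $\|\boldsymbol\alpha_0-\boldsymbol\alpha_0^\star\|_2\le\epsilon$. Let $\mathbf m^\star$ be the optimal solution of $\min_{\mathbf m\ge\mathbf0}P_\lambda(\mathbf m)$. For $k\in[p]$ let $$a=\sum_{i\in[n]}\sum_{l\in\mathcal D_i}(\alpha_0)_{il}\max\{x_{l,k},x_{i,k}\}^2,\qquad b=\sqrt{\sum_{i\in[n]}\Big[\sum_{l\in\mathcal D_i}\max\{x_{i,k},x_{l,k}\}^4+\sum_{j\in\mathcal S_i}\max\{x_{i,k},x_{j,k}\}^4\Big]},$$ $$\lambda'_a=\frac{\lambda_0(2\epsilon b+\|\boldsymbol\alpha_0\|_2b+a)}{2\lambda_0+\|\boldsymbol\alpha_0\|_2b-a}.$$ If $\lambda'_a\le\lambda\le\lambda_0$, then $m^\star_{k'}=0$ for every descendant $k'\supseteq k$.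
   Context: Let $n,K,p\ge1$ be integers, $[n]=\{1,\dots,n\}$. For each $i\in[n]$ let $\mathbf x_i=(x_{i,1},\dots,x_{i,p})^\top\in\mathbb R^p$ have nonnegative entries and let $\mathcal D_i,\mathcal S_i\subseteq[n]$ be sets of size $K$. Put $\mathbf c_{ij}=(\mathbf x_i-\mathbf x_j)\circ(\mathbf x_i-\mathbf x_j)$ (entrywise product). Vectors in $\mathbb R^{2nK}$ are indexed by the pairs $(i,l)$, $l\in\mathcal D_i$ ("different-class pairs") and $(i,j)$, $j\in\mathcal S_i$ ("same-class pairs"); $\boldsymbol\alpha_0$ has entries $(\alpha_0)_{il},(\alpha_0)_{ij}$. $\mathbf C\in\mathbb R^{p\times2nK}$ has column $\mathbf c_{il}$ for each different-class pair and $-\mathbf c_{ij}$ for each same-class pair. Fix $L\ge U\ge0$, $\eta>0$; let $\mathbf t\in\mathbb R^{2nK}$ have entry $L$ at different-class pairs and $-U$ at same-class pairs; $\ell_s(x)=([s-x]_+)^2$ with $[z]_+=\max\{z,0\}$ (entrywise for vectors); $\mathbf1$ is the all-ones vector. For $\lambda>0$, $$P_\lambda(\mathbf m)=\sum_{i\in[n]}\Big[\sum_{l\in\mathcal D_i}\ell_L(\mathbf m^\top\mathbf c_{il})+\sum_{j\in\mathcal S_i}\ell_{-U}(-\mathbf m^\top\mathbf c_{ij})\Big]+\lambda\Big(\mathbf m^\top\mathbf1+\frac\eta2\|\mathbf m\|_2^2\Big)\ (\mathbf m\in\mathbb R^p_{\ge0}),$$ $$D_\lambda(\boldsymbol\alpha)=-\frac14\|\boldsymbol\alpha\|_2^2+\mathbf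 t^\top\boldsymbol\alpha-\frac{\lambda\eta}2\Big\|\frac1{\lambda\eta}[\mathbf C\boldsymbol\alpha-\lambda\mathbf1]_+\Big\|_2^2\ (\boldsymbol\alpha\in\mathbb R^{2nK}_{\ge0}).$$ The feature indices $[p]$ are nodes of a rooted graph-mining tree: $x_{i,k}=g(\#(H_k\sqsubseteq G_i))$, where $H_k$ is the subgraph at node $k$, $G_i$ the $i$-th input graph, $\#(H\sqsubseteq G)$ the number of non-overlapping occurrences of $H$ in $G$, $g$ nonnegative and nondecreasing, and each node's subgraph is contained in its children's subgraphs. Write $k'\supseteq k$ if $k'$ is a descendant of $k$; in particular $0\le x_{i,k'}\le x_{i,k}$ for all $i$ whenever $k'\supseteq k$. *)

theory Defs
  imports Complex_Main
begin

text \<open>Data: x i k is the k-th feature of the i-th input (i in {1..n}, k in {1..p}).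
  D i (different-class neighbours) and S i (same-class neighbours) are subsets of {1..n}.
  Dual vectors in R^{2nK} are functions on the tagged index set pair_idx:
  (True, i, l) for l in D i  and  (False, i, j) for j in S i.\<close>

definition pair_idx :: "nat \<Rightarrow> (nat \<Rightarrow> nat set) \<Rightarrow> (nat \<Rightarrow> nat set) \<Rightarrow> (bool \<times> nat \<times> nat) set" where
  "pair_idx n D S =
     (\<lambda>(i,l). (True,i,l)) ` (SIGMA i:{1..n}. D i) \<union> (\<lambda>(i,j). (False,i,j)) ` (SIGMA i:{1..n}. S i)"

definition cvec :: "(nat \<Rightarrow> nat \<Rightarrow> real) \<Rightarrow> nat \<Rightarrow> nat \<Rightarrow> nat \<Rightarrow> real" where
  "cvec x i j k = (x i k - x j k) * (x i k - x j k)"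

definition pos_part :: "real \<Rightarrow> real" where
  "pos_part z = max z 0"

definition ell :: "real \<Rightarrow> real \<Rightarrow> real" where
  "ell s z = (pos_part (s - z))\<^sup>2"

definition mdot :: "nat \<Rightarrow> (nat \<Rightarrow> real) \<Rightarrow> (nat \<Rightarrow> nat \<Rightarrow> real) \<Rightarrow> nat \<Rightarrow> nat \<Rightarrow> real" where
  "mdot p m x i j = (\<Sum>k\<in>{1..p}. m k * cvec x i j k)"

definition Pobj :: "nat \<Rightarrow> nat \<Rightarrow> (nat \<Rightarrow> nat \<Rightarrow> real) \<Rightarrow> (nat \<Rightarrow> nat set) \<Rightarrow> (nat \<Rightarrow> nat set)
     \<Rightarrow> real \<Rightarrow> real \<Rightarrow> real \<Rightarrow> real \<Rightarrow> (nat \<Rightarrow> real) \<Rightarrow> real" where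
  "Pobj n p x D S L U \<eta> lam m =
     (\<Sum>i\<in>{1..n}. (\<Sum>l\<in>D i. ell L (mdot p m x i l)) + (\<Sum>j\<in>S i. ell (- U) (- mdot p m x i j)))
     + lam * ((\<Sum>k\<in>{1..p}. m k) + \<eta> / 2 * (\<Sum>k\<in>{1..p}. (m k)\<^sup>2))"

definition tvec :: "real \<Rightarrow> real \<Rightarrow> bool \<times> nat \<times> nat \<Rightarrow> real" where
  "tvec L U q = (if fst q then L else - U)"

definition Ccol :: "(nat \<Rightarrow> nat \<Rightarrow> real) \<Rightarrow> bool \<times> nat \<times> nat \<Rightarrow> nat \<Rightarrow> real" where
  "Ccol x q k = (case q of (b, i, j) \<Rightarrow> (if b then cvec x i j k else - cvec x i j k))"

definition Cmul :: "nat \<Rightarrow> (nat \<Rightarrow> nat \<Rightarrow> real) \<Rightarrow> (nat \<Rightarrow> nat set) \<Rightarrow> (nat \<Rightarrow> nat set)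
     \<Rightarrow> (bool \<times> nat \<times> nat \<Rightarrow> real) \<Rightarrow> nat \<Rightarrow> real" where
  "Cmul n x D S \<alpha> k = (\<Sum>q\<in>pair_idx n D S. Ccol x q k * \<alpha> q)"

definition dnorm :: "nat \<Rightarrow> (nat \<Rightarrow> nat set) \<Rightarrow> (nat \<Rightarrow> nat set) \<Rightarrow> (bool \<times> nat \<times> nat \<Rightarrow> real) \<Rightarrow> real" where
  "dnorm n D S \<alpha> = sqrt (\<Sum>q\<in>pair_idx n D S. (\<alpha> q)\<^sup>2)"

definition Dobj :: "nat \<Rightarrow> nat \<Rightarrow> (nat \<Rightarrow> nat \<Rightarrow> real) \<Rightarrow> (nat \<Rightarrow> nat set) \<Rightarrow> (nat \<Rightarrow> nat set)
     \<Rightarrow> real \<Rightarrow> real \<Rightarrow> real \<Rightarrow> real \<Rightarrow> (bool \<times> nat \<times> nat \<Rightarrow> real) \<Rightarrow> real" where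
  "Dobj n p x D S L U \<eta> lam \<alpha> =
     - 1/4 * (dnorm n D S \<alpha>)\<^sup>2 + (\<Sum>q\<in>pair_idx n D S. tvec L U q * \<alpha> q)
     - lam * \<eta> / 2 * (\<Sum>k\<in>{1..p}. (1 / (lam * \<eta>) * pos_part (Cmul n x D S \<alpha> k - lam))\<^sup>2)"

definition dual_feasible :: "nat \<Rightarrow> (nat \<Rightarrow> nat set) \<Rightarrow> (nat \<Rightarrow> nat set) \<Rightarrow> (bool \<times> nat \<times> nat \<Rightarrow> real) \<Rightarrow> bool" where
  "dual_feasible n D S \<alpha> \<longleftrightarrow> (\<forall>q\<in>pair_idx n D S. 0 \<le> \<alpha> q) \<and> (\<forall>q. q \<notin> pair_idx n D S \<longrightarrow> \<alpha> q = 0)"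

definition primal_feasible :: "nat \<Rightarrow> (nat \<Rightarrow> real) \<Rightarrow> bool" where
  "primal_feasible p m \<longleftrightarrow> (\<forall>k\<in>{1..p}. 0 \<le> m k) \<and> (\<forall>k. k \<notin> {1..p} \<longrightarrow> m k = 0)"

end

(*
  Let alpha1 = 2 [t - C^T m*]_+ be the dual point induced by the primal optimum m* at lambda (no
  duality theorem is needed). The primal KKT conditions read (C alpha1)_k <= lambda (1 + eta m*_k),
  with equality where m*_k > 0, so it suffices to show (C alpha1)_k' <= lambda. Testing the
  variational inequality of the concave dual at its optimum alpha0* for lambda0 with
  (lambda0 / lambda) alpha1, and adding the KKT and complementarity conditions, gives
  <alpha1 - alpha0*, lambda0 alpha1 - lambda alpha0*> <= 0: alpha1 lies in the ball with centre
  (lambda0 + lambda) / (2 lambda0) alpha0* and radius (lambda0 - lambda) / (2 lambda0) |alpha0*|,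
  which the triangle inequality enlarges to a ball around the approximation alpha0. Below node k of
  the mining tree every entry of column k' of C is bounded by max (x_ik, x_jk)^2, so Cauchy-Schwarz
  over this ball bounds (C alpha1)_k' by a quantity that is at most lambda once lambda >= lambda'_a.
*)
theory Submission
  imports Defs "HOL-Analysis.L2_Norm"
begin

lemma pos_part_nonneg [simp]: "0 \<le> pos_part z"
  by (simp add: pos_part_def)

lemma pos_part_sq_add_le: "(pos_part (z + d))\<^sup>2 \<le> (pos_part z)\<^sup>2 + 2 * pos_part z * d + d\<^sup>2"
proof (cases "0 \<le> z"; cases "0 \<le> z + d")
  assume "0 \<le> z" "\<not> 0 \<le> z + d"
  then show ?thesis unfolding pos_part_def
    using zero_le_power2[of "z + d"] by (simp add: power2_eq_square algebra_simps)
next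
  assume z: "\<not> 0 \<le> z" "0 \<le> z + d"
  have "z * (z + 2 * d) \<le> 0" using z by (intro mult_nonpos_nonneg) auto
  then show ?thesis using z unfolding pos_part_def by (simp add: power2_eq_square algebra_simps)
qed (auto simp: pos_part_def power2_eq_square algebra_simps)

lemma nonneg_if_quadratic_nonneg_near_0:
  fixes G B c :: real
  assumes "0 < c" and quad: "\<And>s. 0 < s \<Longrightarrow> s < c \<Longrightarrow> 0 \<le> s * G + s\<^sup>2 * B"
  shows "0 \<le> G"
proof (rule ccontr)
  assume "\<not> 0 \<le> G"
  define s where "s = min (c / 2) (- G / (2 * (\<bar>B\<bar> + 1)))"
  have "0 < - G / (2 * (\<bar>B\<bar> + 1))" using \<open>\<not> 0 \<le> G\<close> by (intro divide_pos_pos) auto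
  then have s: "0 < s" "s < c" using \<open>0 < c\<close> by (auto simp: s_def)
  have "s * \<bar>B\<bar> \<le> - G / (2 * (\<bar>B\<bar> + 1)) * \<bar>B\<bar>"
    unfolding s_def by (intro mult_right_mono) auto
  also have "\<dots> < - G"
    using \<open>\<not> 0 \<le> G\<close> mult_nonpos_nonneg[of G "\<bar>B\<bar>"] by (simp add: field_simps)
  finally have "s * (G + s * \<bar>B\<bar>) < 0" using s by (simp add: mult_pos_neg)
  moreover have "s * G + s\<^sup>2 * B \<le> s * (G + s * \<bar>B\<bar>)"
    using s by (simp add: power2_eq_square algebra_simps mult_left_mono)
  ultimately show False using quad[OF s] by linarith
qed

definition nonneg_ext :: "'a set \<Rightarrow> ('a \<Rightarrow> real) \<Rightarrow> bool" where
  "nonneg_ext A f \<longleftrightarrow> (\<forall>a\<in>A. 0 \<le> f a) \<and> (\<forall>a. a \<notin> A \<longrightarrow> f a = 0)"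

lemma nonneg_ext_nonneg: "nonneg_ext A f \<Longrightarrow> a \<in> A \<Longrightarrow> 0 \<le> f a"
  by (simp add: nonneg_ext_def)

lemma nonneg_ext_update:
  assumes "nonneg_ext A f" "a \<in> A" "0 \<le> f a + s"
  shows "nonneg_ext A (f(a := f a + s))"
  using assms by (auto simp: nonneg_ext_def)

lemma nonneg_ext_segment:
  assumes "nonneg_ext A f" "nonneg_ext A g" "0 \<le> s" "s \<le> 1"
  shows "nonneg_ext A (\<lambda>a. f a + s * (g a - f a))"
proof -
  have "f a + s * (g a - f a) = (1 - s) * f a + s * g a" for a by (simp add: algebra_simps)
  then show ?thesis using assms by (auto simp: nonneg_ext_def)
qed

(* m, g satisfy the KKT conditions of a primal coordinate at lam; the first factor compares m with
   the primal coordinate recovered from the dual score g0 at lam0. *)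
lemma kkt_cross_term_nonneg:
  fixes m g g0 lam lam0 \<eta> :: real
  assumes "0 < lam" "0 < lam0" "0 < \<eta>" "0 \<le> m"
    and kkt: "g \<le> lam * (1 + \<eta> * m)" "0 < m \<Longrightarrow> g = lam * (1 + \<eta> * m)"
  shows "0 \<le> (m - pos_part (g0 - lam0) / (lam0 * \<eta>)) * (lam0 * g - lam * g0)"
proof (cases "0 < m")
  case True
  define X where "X = lam0 * \<eta> * m"
  have "0 \<le> X" using assms by (simp add: X_def)
  then have "0 \<le> (X - pos_part (g0 - lam0)) * (X - (g0 - lam0))"
    by (cases "g0 - lam0 \<le> 0") (auto simp: pos_part_def max_def)
  then have "0 \<le> (X - pos_part (g0 - lam0)) * (X - (g0 - lam0)) * (lam / (lam0 * \<eta>))"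
    using assms by simp
  moreover have "m - pos_part (g0 - lam0) / (lam0 * \<eta>) = (X - pos_part (g0 - lam0)) / (lam0 * \<eta>)"
    using assms by (simp add: X_def diff_divide_distrib)
  moreover have "lam0 * g - lam * g0 = lam * (X - (g0 - lam0))"
    using kkt(2)[OF True] by (simp add: X_def algebra_simps)
  ultimately show ?thesis by (simp add: field_simps)
next
  case False
  then have "m = 0" using assms by simp
  show ?thesis
  proof (cases "g0 \<le> lam0")
    case True
    then show ?thesis using \<open>m = 0\<close> by (simp add: pos_part_def)
  next
    case False
    have "lam0 * g \<le> lam0 * lam" using assms \<open>m = 0\<close> by simp
    moreover have "lam * lam0 < lam * g0" using False assms by simp
    ultimately have "lam0 * g - lam * g0 \<le> 0" by (simp add: mult.commute)
    moreover have "0 \<le> pos_part (g0 - lam0) / (lam0 * \<eta>)" using assms by simp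
    ultimately have "0 \<le> (- (pos_part (g0 - lam0) / (lam0 * \<eta>))) * (lam0 * g - lam * g0)"
      by (intro mult_nonpos_nonpos) auto
    then show ?thesis using \<open>m = 0\<close> by simp
  qed
qed

lemma L2_set_ball_of_inner_nonpos:
  fixes u v :: "'a \<Rightarrow> real"
  assumes "0 < lam0" "lam \<le> lam0" and inner: "(\<Sum>q\<in>Q. (u q - v q) * (lam0 * u q - lam * v q)) \<le> 0"
  shows "L2_set (\<lambda>q. u q - (lam0 + lam) / (2 * lam0) * v q) Q \<le> (lam0 - lam) / (2 * lam0) * L2_set v Q"
proof -
  define c where "c = (lam0 + lam) / (2 * lam0)"
  define r where "r = (lam0 - lam) / (2 * lam0)"
  have "0 \<le> r" using assms by (simp add: r_def)
  have "(\<Sum>q\<in>Q. (u q - c * v q)\<^sup>2) - r\<^sup>2 * (\<Sum>q\<in>Q. (v q)\<^sup>2)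
      = (\<Sum>q\<in>Q. (u q - c * v q)\<^sup>2 - r\<^sup>2 * (v q)\<^sup>2)"
    by (simp add: sum_subtractf sum_distrib_left)
  also have "\<dots> = (\<Sum>q\<in>Q. (u q - v q) * (lam0 * u q - lam * v q) / lam0)"
    using assms by (intro sum.cong) (auto simp: c_def r_def field_simps power2_eq_square)
  also have "\<dots> = (\<Sum>q\<in>Q. (u q - v q) * (lam0 * u q - lam * v q)) / lam0"
    by (simp add: sum_divide_distrib)
  also have "\<dots> \<le> 0" using inner assms by (simp add: divide_nonpos_pos)
  finally have "sqrt (\<Sum>q\<in>Q. (u q - c * v q)\<^sup>2) \<le> sqrt (r\<^sup>2 * (\<Sum>q\<in>Q. (v q)\<^sup>2))" by simp
  then show ?thesis using \<open>0 \<le> r\<close> unfolding L2_set_def c_def[symmetric] r_def[symmetric]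
    by (simp add: real_sqrt_mult)
qed

lemma L2_set_shift_center:
  fixes u v w :: "'a \<Rightarrow> real"
  assumes "0 \<le> c" "0 \<le> r" and ball: "L2_set (\<lambda>q. u q - c * w q) Q \<le> r * L2_set w Q"
    and close: "L2_set (\<lambda>q. v q - w q) Q \<le> \<epsilon>"
  shows "L2_set (\<lambda>q. u q - c * v q) Q \<le> r * (L2_set v Q + \<epsilon>) + c * \<epsilon>"
proof -
  have close': "L2_set (\<lambda>q. w q - v q) Q \<le> \<epsilon>"
    using close unfolding L2_set_def by (simp add: power2_commute)
  have "L2_set w Q \<le> L2_set v Q + \<epsilon>"
    using L2_set_triangle_ineq[of v "\<lambda>q. w q - v q" Q] close' by simp
  have "L2_set (\<lambda>q. u q - c * v q) Q \<le> L2_set (\<lambda>q. u q - c * w q) Q + L2_set (\<lambda>q. c * (w q - v q)) Q"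
    using L2_set_triangle_ineq[of "\<lambda>q. u q - c * w q" "\<lambda>q. c * (w q - v q)" Q]
    by (simp add: algebra_simps)
  also have "\<dots> \<le> r * (L2_set v Q + \<epsilon>) + c * \<epsilon>"
    unfolding L2_set_right_distrib[OF \<open>0 \<le> c\<close>, symmetric]
    using ball \<open>L2_set w Q \<le> L2_set v Q + \<epsilon>\<close> close' assms(1,2)
    by (meson add_mono mult_left_mono order_trans)
  finally show ?thesis .
qed

section \<open>Nonnegative squared-hinge regression and its dual\<close>

(* A q k is entry k of the column of C indexed by q, so C_mul alpha = C alpha and CT_mul m = C^T m. *)
locale sq_hinge_problem =
  fixes Q :: "'q set" and Ks :: "'k set" and A :: "'q \<Rightarrow> 'k \<Rightarrow> real" and t :: "'q \<Rightarrow> real"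
    and \<eta> :: real
  assumes finite_Ks: "finite Ks" and eta_pos: "0 < \<eta>"
begin

definition C_mul :: "('q \<Rightarrow> real) \<Rightarrow> 'k \<Rightarrow> real" where
  "C_mul \<alpha> k = (\<Sum>q\<in>Q. A q k * \<alpha> q)"

definition CT_mul :: "('k \<Rightarrow> real) \<Rightarrow> 'q \<Rightarrow> real" where
  "CT_mul m q = (\<Sum>k\<in>Ks. m k * A q k)"

definition primal_obj :: "real \<Rightarrow> ('k \<Rightarrow> real) \<Rightarrow> real" where
  "primal_obj lam m = (\<Sum>q\<in>Q. (pos_part (t q - CT_mul m q))\<^sup>2)
     + lam * ((\<Sum>k\<in>Ks. m k) + \<eta> / 2 * (\<Sum>k\<in>Ks. (m k)\<^sup>2))"

definition dual_obj :: "real \<Rightarrow> ('q \<Rightarrow> real) \<Rightarrow> real" where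
  "dual_obj lam \<alpha> = - 1/4 * (\<Sum>q\<in>Q. (\<alpha> q)\<^sup>2) + (\<Sum>q\<in>Q. t q * \<alpha> q)
     - 1 / (2 * lam * \<eta>) * (\<Sum>k\<in>Ks. (pos_part (C_mul \<alpha> k - lam))\<^sup>2)"

definition dual_of_primal :: "('k \<Rightarrow> real) \<Rightarrow> 'q \<Rightarrow> real" where
  "dual_of_primal m q = 2 * pos_part (t q - CT_mul m q)"

definition primal_of_dual :: "real \<Rightarrow> ('q \<Rightarrow> real) \<Rightarrow> 'k \<Rightarrow> real" where
  "primal_of_dual lam \<alpha> k = pos_part (C_mul \<alpha> k - lam) / (lam * \<eta>)"

definition dual_grad :: "real \<Rightarrow> ('q \<Rightarrow> real) \<Rightarrow> 'q \<Rightarrow> real" where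
  "dual_grad lam \<alpha> q = - \<alpha> q / 2 + t q - CT_mul (primal_of_dual lam \<alpha>) q"

lemma sum_CT_mul_mult: "(\<Sum>q\<in>Q. CT_mul m q * w q) = (\<Sum>k\<in>Ks. m k * C_mul w k)"
  unfolding CT_mul_def C_mul_def
  by (simp add: sum_distrib_left sum_distrib_right sum.swap[of _ Q] mult_ac)

lemma C_mul_add_scaled: "C_mul (\<lambda>q. \<alpha> q + s * d q) k = C_mul \<alpha> k + s * C_mul d k"
  unfolding C_mul_def by (simp add: sum.distrib sum_distrib_left algebra_simps)

lemma CT_mul_diff: "CT_mul (\<lambda>k. m k - m' k) q = CT_mul m q - CT_mul m' q"
  unfolding CT_mul_def by (simp add: sum_subtractf algebra_simps)

lemma CT_mul_update:
  assumes "k \<in> Ks"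
  shows "CT_mul (m(k := m k + s)) q = CT_mul m q + s * A q k"
proof -
  have "CT_mul (m(k := m k + s)) q = (\<Sum>j\<in>Ks. m j * A q j + (if j = k then s * A q k else 0))"
    unfolding CT_mul_def by (intro sum.cong) (auto simp: algebra_simps)
  then show ?thesis using assms finite_Ks by (simp add: sum.distrib CT_mul_def)
qed

lemma primal_obj_update_le:
  assumes "k \<in> Ks"
  shows "primal_obj lam (m(k := m k + s)) \<le> primal_obj lam m
    + s * (lam * (1 + \<eta> * m k) - C_mul (dual_of_primal m) k)
    + s\<^sup>2 * ((\<Sum>q\<in>Q. (A q k)\<^sup>2) + lam * \<eta> / 2)"
proof -
  define z where "z q = t q - CT_mul m q" for q
  have "(\<Sum>j\<in>Ks. (m(k := m k + s)) j) = (\<Sum>j\<in>Ks. m j + (if j = k then s else 0))"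
    by (intro sum.cong) auto
  then have sum_upd: "(\<Sum>j\<in>Ks. (m(k := m k + s)) j) = (\<Sum>j\<in>Ks. m j) + s"
    using assms finite_Ks by (simp add: sum.distrib)
  have "(\<Sum>j\<in>Ks. ((m(k := m k + s)) j)\<^sup>2) = (\<Sum>j\<in>Ks. (m j)\<^sup>2 + (if j = k then 2 * s * m k + s\<^sup>2 else 0))"
    by (intro sum.cong) (auto simp: power2_eq_square algebra_simps)
  then have sq_upd: "(\<Sum>j\<in>Ks. ((m(k := m k + s)) j)\<^sup>2) = (\<Sum>j\<in>Ks. (m j)\<^sup>2) + 2 * s * m k + s\<^sup>2"
    using assms finite_Ks by (simp add: sum.distrib)
  have "(\<Sum>q\<in>Q. (pos_part (t q - CT_mul (m(k := m k + s)) q))\<^sup>2)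
      = (\<Sum>q\<in>Q. (pos_part (z q + - s * A q k))\<^sup>2)"
    unfolding CT_mul_update[OF assms] z_def by (simp add: algebra_simps)
  also have "\<dots> \<le> (\<Sum>q\<in>Q. (pos_part (z q))\<^sup>2 + 2 * pos_part (z q) * (- s * A q k) + (- s * A q k)\<^sup>2)"
    by (intro sum_mono pos_part_sq_add_le)
  also have "\<dots> = (\<Sum>q\<in>Q. (pos_part (z q))\<^sup>2) - s * C_mul (dual_of_primal m) k + s\<^sup>2 * (\<Sum>q\<in>Q. (A q k)\<^sup>2)"
    by (simp add: C_mul_def dual_of_primal_def z_def sum.distrib sum_subtractf sum_distrib_left
        power_mult_distrib algebra_simps)
  finally show ?thesis
    unfolding primal_obj_def sum_upd sq_upd z_def by (simp add: algebra_simps)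
qed

lemma primal_kkt:
  assumes ms: "nonneg_ext Ks ms" and opt: "\<And>m. nonneg_ext Ks m \<Longrightarrow> primal_obj lam ms \<le> primal_obj lam m"
    and k: "k \<in> Ks"
  shows "C_mul (dual_of_primal ms) k \<le> lam * (1 + \<eta> * ms k)"
    and "0 < ms k \<Longrightarrow> C_mul (dual_of_primal ms) k = lam * (1 + \<eta> * ms k)"
proof -
  define G where "G = lam * (1 + \<eta> * ms k) - C_mul (dual_of_primal ms) k"
  define B where "B = (\<Sum>q\<in>Q. (A q k)\<^sup>2) + lam * \<eta> / 2"
  have quad: "0 \<le> s * G + s\<^sup>2 * B" if "0 \<le> ms k + s" for s
  proof -
    have "primal_obj lam ms \<le> primal_obj lam (ms(k := ms k + s))"
      using nonneg_ext_update[OF ms k that] by (rule opt)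
    with primal_obj_update_le[OF k, of lam ms s] show ?thesis unfolding G_def B_def by linarith
  qed
  have "0 \<le> G"
    by (rule nonneg_if_quadratic_nonneg_near_0[of 1 G B]) (use quad nonneg_ext_nonneg[OF ms k] in auto)
  then show "C_mul (dual_of_primal ms) k \<le> lam * (1 + \<eta> * ms k)" unfolding G_def by simp
  assume "0 < ms k"
  have "0 \<le> - G"
  proof (rule nonneg_if_quadratic_nonneg_near_0[of "ms k" "- G" B])
    fix u :: real assume "0 < u" "u < ms k"
    then show "0 \<le> u * - G + u\<^sup>2 * B" using quad[of "- u"] by simp
  qed fact
  with \<open>0 \<le> G\<close> show "C_mul (dual_of_primal ms) k = lam * (1 + \<eta> * ms k)" unfolding G_def by simp
qed

lemma dual_obj_update_ge:
  assumes "0 < lam"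
  shows "dual_obj lam \<alpha> + s * (\<Sum>q\<in>Q. dual_grad lam \<alpha> q * d q)
    - s\<^sup>2 * ((\<Sum>q\<in>Q. (d q)\<^sup>2) / 4 + (\<Sum>k\<in>Ks. (C_mul d k)\<^sup>2) / (2 * lam * \<eta>))
    \<le> dual_obj lam (\<lambda>q. \<alpha> q + s * d q)"
proof -
  define v where "v k = C_mul \<alpha> k - lam" for k
  define c where "c = 1 / (2 * lam * \<eta>)"
  have "0 < c" using assms eta_pos by (simp add: c_def)
  have grad: "(\<Sum>q\<in>Q. dual_grad lam \<alpha> q * d q)
      = - 1/2 * (\<Sum>q\<in>Q. \<alpha> q * d q) + (\<Sum>q\<in>Q. t q * d q) - 2 * c * (\<Sum>k\<in>Ks. pos_part (v k) * C_mul d k)"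
  proof -
    have "(\<Sum>q\<in>Q. dual_grad lam \<alpha> q * d q) = - 1/2 * (\<Sum>q\<in>Q. \<alpha> q * d q) + (\<Sum>q\<in>Q. t q * d q)
        - (\<Sum>q\<in>Q. CT_mul (primal_of_dual lam \<alpha>) q * d q)"
      unfolding dual_grad_def by (simp add: sum_subtractf sum.distrib sum_distrib_left sum_negf algebra_simps)
    also have "(\<Sum>q\<in>Q. CT_mul (primal_of_dual lam \<alpha>) q * d q) = 2 * c * (\<Sum>k\<in>Ks. pos_part (v k) * C_mul d k)"
      unfolding sum_CT_mul_mult primal_of_dual_def v_def c_def by (simp add: sum_distrib_left)
    finally show ?thesis .
  qed
  have "(\<Sum>k\<in>Ks. (pos_part (C_mul (\<lambda>q. \<alpha> q + s * d q) k - lam))\<^sup>2)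
      \<le> (\<Sum>k\<in>Ks. (pos_part (v k))\<^sup>2 + 2 * pos_part (v k) * (s * C_mul d k) + (s * C_mul d k)\<^sup>2)"
  proof (intro sum_mono)
    fix k
    show "(pos_part (C_mul (\<lambda>q. \<alpha> q + s * d q) k - lam))\<^sup>2
        \<le> (pos_part (v k))\<^sup>2 + 2 * pos_part (v k) * (s * C_mul d k) + (s * C_mul d k)\<^sup>2"
      using pos_part_sq_add_le[of "v k" "s * C_mul d k"] unfolding C_mul_add_scaled v_def
      by (simp add: algebra_simps)
  qed
  also have "\<dots> = (\<Sum>k\<in>Ks. (pos_part (v k))\<^sup>2) + 2 * s * (\<Sum>k\<in>Ks. pos_part (v k) * C_mul d k)
      + s\<^sup>2 * (\<Sum>k\<in>Ks. (C_mul d k)\<^sup>2)"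
    by (simp add: sum.distrib sum_distrib_left power_mult_distrib algebra_simps)
  finally have penalty: "c * (\<Sum>k\<in>Ks. (pos_part (C_mul (\<lambda>q. \<alpha> q + s * d q) k - lam))\<^sup>2)
      \<le> c * ((\<Sum>k\<in>Ks. (pos_part (v k))\<^sup>2) + 2 * s * (\<Sum>k\<in>Ks. pos_part (v k) * C_mul d k)
      + s\<^sup>2 * (\<Sum>k\<in>Ks. (C_mul d k)\<^sup>2))"
    using \<open>0 < c\<close> by (intro mult_left_mono) auto
  have quad: "(\<Sum>q\<in>Q. (\<alpha> q + s * d q)\<^sup>2)
      = (\<Sum>q\<in>Q. (\<alpha> q)\<^sup>2) + 2 * s * (\<Sum>q\<in>Q. \<alpha> q * d q) + s\<^sup>2 * (\<Sum>q\<in>Q. (d q)\<^sup>2)"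
    by (simp add: power2_sum sum.distrib sum_distrib_left power_mult_distrib algebra_simps)
  have lin: "(\<Sum>q\<in>Q. t q * (\<alpha> q + s * d q)) = (\<Sum>q\<in>Q. t q * \<alpha> q) + s * (\<Sum>q\<in>Q. t q * d q)"
    by (simp add: sum.distrib sum_distrib_left algebra_simps)
  have "(\<Sum>k\<in>Ks. (C_mul d k)\<^sup>2) / (2 * lam * \<eta>) = c * (\<Sum>k\<in>Ks. (C_mul d k)\<^sup>2)"
    by (simp add: c_def)
  then show ?thesis
    using penalty unfolding dual_obj_def grad quad lin c_def[symmetric] v_def[symmetric]
    by (simp add: algebra_simps)
qed

lemma dual_variational_ineq:
  assumes "0 < lam" and \<alpha>: "nonneg_ext Q \<alpha>"
    and opt: "\<And>\<beta>. nonneg_ext Q \<beta> \<Longrightarrow> dual_obj lam \<beta> \<le> dual_obj lam \<alpha>"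
    and \<beta>: "nonneg_ext Q \<beta>"
  shows "(\<Sum>q\<in>Q. dual_grad lam \<alpha> q * (\<beta> q - \<alpha> q)) \<le> 0"
proof -
  define G where "G = (\<Sum>q\<in>Q. dual_grad lam \<alpha> q * (\<beta> q - \<alpha> q))"
  define B where "B = (\<Sum>q\<in>Q. (\<beta> q - \<alpha> q)\<^sup>2) / 4 + (\<Sum>k\<in>Ks. (C_mul (\<lambda>q. \<beta> q - \<alpha> q) k)\<^sup>2) / (2 * lam * \<eta>)"
  have "0 \<le> s * - G + s\<^sup>2 * B" if "0 < s" "s < 1" for s
  proof -
    have "dual_obj lam (\<lambda>q. \<alpha> q + s * (\<beta> q - \<alpha> q)) \<le> dual_obj lam \<alpha>"
      using that by (intro opt nonneg_ext_segment[OF \<alpha> \<beta>]) auto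
    moreover note dual_obj_update_ge[OF \<open>0 < lam\<close>, of \<alpha> s "\<lambda>q. \<beta> q - \<alpha> q"]
    ultimately show ?thesis unfolding G_def B_def by (simp add: algebra_simps)
  qed
  then have "0 \<le> - G" by (intro nonneg_if_quadratic_nonneg_near_0[of 1 "- G" B]) auto
  then show ?thesis unfolding G_def by simp
qed

lemma dual_of_primal_residual:
  "- dual_of_primal m q / 2 + t q - CT_mul m q \<le> 0"
  "(- dual_of_primal m q / 2 + t q - CT_mul m q) * dual_of_primal m q = 0"
  by (simp_all add: dual_of_primal_def pos_part_def max_def)

lemma kkt_cross_sum_nonneg:
  assumes "0 < lam" "0 < lam0"
    and ms: "nonneg_ext Ks ms" "\<And>m. nonneg_ext Ks m \<Longrightarrow> primal_obj lam ms \<le> primal_obj lam m"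
  shows "0 \<le> (\<Sum>k\<in>Ks. (ms k - primal_of_dual lam0 \<alpha> k)
    * (lam0 * C_mul (dual_of_primal ms) k - lam * C_mul \<alpha> k))"
proof (rule sum_nonneg)
  fix k assume "k \<in> Ks"
  show "0 \<le> (ms k - primal_of_dual lam0 \<alpha> k) * (lam0 * C_mul (dual_of_primal ms) k - lam * C_mul \<alpha> k)"
    unfolding primal_of_dual_def
    by (rule kkt_cross_term_nonneg)
      (use assms eta_pos nonneg_ext_nonneg[OF ms(1) \<open>k \<in> Ks\<close>] primal_kkt[OF ms \<open>k \<in> Ks\<close>] in auto)
qed

lemma dual_of_primal_in_ball:
  assumes lam: "0 < lam" "lam \<le> lam0"
    and \<alpha>0: "nonneg_ext Q \<alpha>0" "\<And>\<alpha>. nonneg_ext Q \<alpha> \<Longrightarrow> dual_obj lam0 \<alpha> \<le> dual_obj lam0 \<alpha>0"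
    and ms: "nonneg_ext Ks ms" "\<And>m. nonneg_ext Ks m \<Longrightarrow> primal_obj lam ms \<le> primal_obj lam m"
  shows "L2_set (\<lambda>q. dual_of_primal ms q - (lam0 + lam) / (2 * lam0) * \<alpha>0 q) Q
    \<le> (lam0 - lam) / (2 * lam0) * L2_set \<alpha>0 Q"
proof -
  define \<alpha>1 where "\<alpha>1 = dual_of_primal ms"
  define W where "W q = lam0 * \<alpha>1 q - lam * \<alpha>0 q" for q
  define m0 where "m0 = primal_of_dual lam0 \<alpha>0"
  define g1 where "g1 q = - \<alpha>1 q / 2 + t q - CT_mul ms q" for q
  have "0 < lam0" using lam by simp
  have vi: "(\<Sum>q\<in>Q. dual_grad lam0 \<alpha>0 q * W q) \<le> 0"
  proof -
    define \<beta> where "\<beta> q = (if q \<in> Q then lam0 / lam * \<alpha>1 q else 0)" for q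
    have "nonneg_ext Q \<beta>" using lam by (auto simp: nonneg_ext_def \<beta>_def \<alpha>1_def dual_of_primal_def)
    then have "(\<Sum>q\<in>Q. dual_grad lam0 \<alpha>0 q * (\<beta> q - \<alpha>0 q)) \<le> 0"
      using dual_variational_ineq[OF \<open>0 < lam0\<close> \<alpha>0] by blast
    moreover have "(\<Sum>q\<in>Q. dual_grad lam0 \<alpha>0 q * W q) = lam * (\<Sum>q\<in>Q. dual_grad lam0 \<alpha>0 q * (\<beta> q - \<alpha>0 q))"
      unfolding sum_distrib_left using lam by (intro sum.cong) (auto simp: W_def \<beta>_def algebra_simps)
    ultimately show ?thesis using lam by (simp add: mult_nonneg_nonpos)
  qed
  have residual: "0 \<le> (\<Sum>q\<in>Q. g1 q * W q)"
  proof (rule sum_nonneg)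
    fix q assume "q \<in> Q"
    have "g1 q * W q = - lam * (g1 q * \<alpha>0 q)"
      using dual_of_primal_residual(2)[of ms q] by (simp add: g1_def W_def \<alpha>1_def algebra_simps)
    moreover have "g1 q * \<alpha>0 q \<le> 0"
      using dual_of_primal_residual(1)[of ms q] nonneg_ext_nonneg[OF \<alpha>0(1) \<open>q \<in> Q\<close>]
      unfolding g1_def \<alpha>1_def by (rule mult_nonpos_nonneg)
    ultimately show "0 \<le> g1 q * W q" using lam by (simp add: mult_nonneg_nonpos)
  qed
  have "(\<Sum>q\<in>Q. CT_mul (\<lambda>k. ms k - m0 k) q * W q)
      = (\<Sum>k\<in>Ks. (ms k - m0 k) * (lam0 * C_mul \<alpha>1 k - lam * C_mul \<alpha>0 k))"
    unfolding sum_CT_mul_mult W_def C_mul_def by (simp add: sum_subtractf sum_distrib_left algebra_simps)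
  then have cross: "0 \<le> (\<Sum>q\<in>Q. CT_mul (\<lambda>k. ms k - m0 k) q * W q)"
    using kkt_cross_sum_nonneg[OF \<open>0 < lam\<close> \<open>0 < lam0\<close> ms] unfolding m0_def \<alpha>1_def by simp
  have "(\<Sum>q\<in>Q. (\<alpha>1 q - \<alpha>0 q) * W q) = 2 * ((\<Sum>q\<in>Q. dual_grad lam0 \<alpha>0 q * W q)
      - (\<Sum>q\<in>Q. g1 q * W q) - (\<Sum>q\<in>Q. CT_mul (\<lambda>k. ms k - m0 k) q * W q))"
    unfolding sum_subtractf[symmetric] sum_distrib_left
    by (intro sum.cong) (auto simp: dual_grad_def g1_def CT_mul_diff m0_def algebra_simps)
  with vi residual cross have "(\<Sum>q\<in>Q. (\<alpha>1 q - \<alpha>0 q) * W q) \<le> 0" by argo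
  then show ?thesis
    unfolding W_def \<alpha>1_def by (rule L2_set_ball_of_inner_nonpos[OF \<open>0 < lam0\<close> lam(2)])
qed

lemma screening_rule:
  assumes lam: "0 < lam" "lam \<le> lam0"
    and \<alpha>0s: "nonneg_ext Q \<alpha>0s" "\<And>\<alpha>. nonneg_ext Q \<alpha> \<Longrightarrow> dual_obj lam0 \<alpha> \<le> dual_obj lam0 \<alpha>0s"
    and ms: "nonneg_ext Ks ms" "\<And>m. nonneg_ext Ks m \<Longrightarrow> primal_obj lam ms \<le> primal_obj lam m"
    and close: "L2_set (\<lambda>q. \<alpha>0 q - \<alpha>0s q) Q \<le> \<epsilon>"
    and j: "j \<in> Ks" and score: "C_mul \<alpha>0 j \<le> a" and col: "L2_set (\<lambda>q. A q j) Q \<le> b"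
    and test: "lam0 * (2 * \<epsilon> * b + L2_set \<alpha>0 Q * b + a) \<le> lam * (2 * lam0 + L2_set \<alpha>0 Q * b - a)"
  shows "ms j = 0"
proof -
  define \<alpha>1 where "\<alpha>1 = dual_of_primal ms"
  define c where "c = (lam0 + lam) / (2 * lam0)"
  define r where "r = (lam0 - lam) / (2 * lam0)"
  define N where "N = L2_set \<alpha>0 Q"
  have "0 \<le> c" "0 \<le> r" using lam by (auto simp: c_def r_def)
  have "0 \<le> b" using col L2_set_nonneg[of "\<lambda>q. A q j" Q] by linarith
  have "L2_set (\<lambda>q. \<alpha>1 q - c * \<alpha>0s q) Q \<le> r * L2_set \<alpha>0s Q"
    unfolding \<alpha>1_def c_def r_def by (rule dual_of_primal_in_ball[OF lam \<alpha>0s ms])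
  then have dist: "L2_set (\<lambda>q. \<alpha>1 q - c * \<alpha>0 q) Q \<le> r * (N + \<epsilon>) + c * \<epsilon>"
    using L2_set_shift_center[OF \<open>0 \<le> c\<close> \<open>0 \<le> r\<close> _ close] unfolding N_def by blast
  have "(\<Sum>q\<in>Q. A q j * (\<alpha>1 q - c * \<alpha>0 q)) \<le> (\<Sum>q\<in>Q. \<bar>A q j\<bar> * \<bar>\<alpha>1 q - c * \<alpha>0 q\<bar>)"
    by (intro sum_mono) (metis abs_ge_self abs_mult)
  also have "\<dots> \<le> L2_set (\<lambda>q. A q j) Q * L2_set (\<lambda>q. \<alpha>1 q - c * \<alpha>0 q) Q"
    by (rule L2_set_mult_ineq)
  also have "\<dots> \<le> b * (r * (N + \<epsilon>) + c * \<epsilon>)"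
    using col dist \<open>0 \<le> b\<close> by (intro mult_mono) auto
  finally have "C_mul \<alpha>1 j \<le> c * a + b * (r * (N + \<epsilon>) + c * \<epsilon>)"
    using mult_left_mono[OF score \<open>0 \<le> c\<close>]
    by (simp add: C_mul_def sum_distrib_left sum_subtractf algebra_simps)
  also have "\<dots> \<le> lam"
  proof -
    have "2 * lam0 * (c * a + b * (r * (N + \<epsilon>) + c * \<epsilon>))
        = lam0 * (2 * \<epsilon> * b + N * b + a) + lam * a - lam * N * b"
      using lam by (simp add: c_def r_def field_simps)
    also have "\<dots> \<le> 2 * lam0 * lam" using test by (simp add: N_def algebra_simps)
    finally show ?thesis using lam by simp
  qed
  finally have "C_mul \<alpha>1 j \<le> lam" .
  show "ms j = 0"
  proof (rule ccontr)
    assume "ms j \<noteq> 0"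
    then have "0 < ms j" using nonneg_ext_nonneg[OF ms(1) j] by simp
    then have "C_mul \<alpha>1 j = lam * (1 + \<eta> * ms j)"
      using primal_kkt(2)[OF ms j] unfolding \<alpha>1_def by blast
    moreover have "lam < lam * (1 + \<eta> * ms j)" using lam eta_pos \<open>0 < ms j\<close> by simp
    ultimately show False using \<open>C_mul \<alpha>1 j \<le> lam\<close> by simp
  qed
qed

end

section \<open>Pair features along a graph-mining tree\<close>

lemma dnorm_eq_L2_set: "dnorm n D S \<alpha> = L2_set \<alpha> (pair_idx n D S)"
  unfolding dnorm_def L2_set_def ..

lemma dual_feasible_eq: "dual_feasible n D S = nonneg_ext (pair_idx n D S)"
  unfolding dual_feasible_def nonneg_ext_def by (intro ext) (rule refl)

lemma primal_feasible_eq: "primal_feasible p = nonneg_ext {1..p}"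
  unfolding primal_feasible_def nonneg_ext_def by (intro ext) (rule refl)

locale metric_learning_problem =
  fixes n p :: nat and x :: "nat \<Rightarrow> nat \<Rightarrow> real" and D S :: "nat \<Rightarrow> nat set" and L U \<eta> :: real
  assumes D_subset: "\<And>i. i \<in> {1..n} \<Longrightarrow> D i \<subseteq> {1..n}"
    and S_subset: "\<And>i. i \<in> {1..n} \<Longrightarrow> S i \<subseteq> {1..n}"
    and eta_positive: "0 < \<eta>"
begin

lemma finite_D: "i \<in> {1..n} \<Longrightarrow> finite (D i)"
  by (rule finite_subset[OF D_subset]) auto

lemma finite_S: "i \<in> {1..n} \<Longrightarrow> finite (S i)"
  by (rule finite_subset[OF S_subset]) auto

sublocale sq_hinge_problem "pair_idx n D S" "{1..p}" "Ccol x" "tvec L U" \<eta>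
  using eta_positive by unfold_locales auto

lemma sum_pair_idx:
  "sum f (pair_idx n D S) = (\<Sum>i\<in>{1..n}. (\<Sum>l\<in>D i. f (True, i, l)) + (\<Sum>j\<in>S i. f (False, i, j)))"
proof -
  have tagged: "sum f ((\<lambda>(i, l). (b, i, l)) ` (SIGMA i:{1..n}. E i)) = (\<Sum>i\<in>{1..n}. \<Sum>l\<in>E i. f (b, i, l))"
    if "\<And>i. i \<in> {1..n} \<Longrightarrow> finite (E i)" for b and E :: "nat \<Rightarrow> nat set"
  proof -
    have "inj_on (\<lambda>(i, l). (b, i, l)) (SIGMA i:{1..n}. E i)" by (auto simp: inj_on_def)
    then have "sum f ((\<lambda>(i, l). (b, i, l)) ` (SIGMA i:{1..n}. E i)) = (\<Sum>(i, l)\<in>(SIGMA i:{1..n}. E i). f (b, i, l))"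
      by (simp add: sum.reindex split_def)
    also have "\<dots> = (\<Sum>i\<in>{1..n}. \<Sum>l\<in>E i. f (b, i, l))"
      by (rule sum.Sigma[symmetric]) (use that in auto)
    finally show ?thesis .
  qed
  have "sum f (pair_idx n D S) = sum f ((\<lambda>(i, l). (True, i, l)) ` (SIGMA i:{1..n}. D i))
      + sum f ((\<lambda>(i, j). (False, i, j)) ` (SIGMA i:{1..n}. S i))"
    unfolding pair_idx_def
    by (intro sum.union_disjoint finite_imageI finite_SigmaI) (use finite_D finite_S in auto)
  also have "\<dots> = (\<Sum>i\<in>{1..n}. \<Sum>l\<in>D i. f (True, i, l)) + (\<Sum>i\<in>{1..n}. \<Sum>j\<in>S i. f (False, i, j))"
    using tagged[OF finite_D, where b = True] tagged[OF finite_S, where b = False] by simp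
  finally show ?thesis by (simp add: sum.distrib)
qed

lemma pair_idxE:
  assumes "q \<in> pair_idx n D S"
  obtains b i j where "q = (b, i, j)" "i \<in> {1..n}" "j \<in> {1..n}"
proof -
  have "\<exists>b i j. q = (b, i, j) \<and> i \<in> {1..n} \<and> j \<in> D i \<union> S i"
    using assms unfolding pair_idx_def by auto
  then obtain b i j where "q = (b, i, j)" "i \<in> {1..n}" "j \<in> D i \<union> S i" by blast
  moreover have "D i \<union> S i \<subseteq> {1..n}" using D_subset S_subset \<open>i \<in> {1..n}\<close> by simp
  ultimately show ?thesis using that by blast
qed

lemma Pobj_eq_primal_obj: "Pobj n p x D S L U \<eta> lam m = primal_obj lam m"
proof -
  have "CT_mul m (True, i, l) = mdot p m x i l" "CT_mul m (False, i, l) = - mdot p m x i l" for i l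
    unfolding CT_mul_def mdot_def Ccol_def by (simp_all add: sum_negf)
  then show ?thesis
    unfolding Pobj_def primal_obj_def sum_pair_idx by (simp add: ell_def tvec_def)
qed

lemma Dobj_eq_dual_obj: "Dobj n p x D S L U \<eta> lam \<alpha> = dual_obj lam \<alpha>"
proof -
  have norm: "(dnorm n D S \<alpha>)\<^sup>2 = (\<Sum>q\<in>pair_idx n D S. (\<alpha> q)\<^sup>2)"
    unfolding dnorm_def by (simp add: sum_nonneg)
  have scale: "lam * \<eta> / 2 * (1 / (lam * \<eta>) * z)\<^sup>2 = 1 / (2 * lam * \<eta>) * z\<^sup>2" for z :: real
    by (cases "lam * \<eta> = 0") (auto simp: power2_eq_square)
  have penalty: "lam * \<eta> / 2 * (\<Sum>k\<in>{1..p}. (1 / (lam * \<eta>) * pos_part (Cmul n x D S \<alpha> k - lam))\<^sup>2)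
      = 1 / (2 * lam * \<eta>) * (\<Sum>k\<in>{1..p}. (pos_part (C_mul \<alpha> k - lam))\<^sup>2)"
    unfolding sum_distrib_left Cmul_def C_mul_def scale ..
  show ?thesis
    unfolding Dobj_def dual_obj_def norm penalty ..
qed

definition pair_max_sq :: "nat \<Rightarrow> bool \<times> nat \<times> nat \<Rightarrow> real" where
  "pair_max_sq k q = (case q of (_, i, j) \<Rightarrow> (max (x i k) (x j k))\<^sup>2)"

lemma pair_max_sq_nonneg [simp]: "0 \<le> pair_max_sq k q"
  by (simp add: pair_max_sq_def split: prod.split)

definition score_bound :: "(bool \<times> nat \<times> nat \<Rightarrow> real) \<Rightarrow> nat \<Rightarrow> real" where
  "score_bound \<alpha> k = (\<Sum>i\<in>{1..n}. \<Sum>l\<in>D i. \<alpha> (True, i, l) * (max (x l k) (x i k))\<^sup>2)"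

definition column_bound :: "nat \<Rightarrow> real" where
  "column_bound k = sqrt (\<Sum>i\<in>{1..n}. (\<Sum>l\<in>D i. (max (x i k) (x l k)) ^ 4) + (\<Sum>j\<in>S i. (max (x i k) (x j k)) ^ 4))"

lemma score_bound_eq: "score_bound \<alpha> k = (\<Sum>q\<in>pair_idx n D S. if fst q then \<alpha> q * pair_max_sq k q else 0)"
  unfolding score_bound_def sum_pair_idx pair_max_sq_def by (simp add: max.commute)

lemma column_bound_eq: "column_bound k = L2_set (pair_max_sq k) (pair_idx n D S)"
  unfolding column_bound_def L2_set_def sum_pair_idx pair_max_sq_def by simp

lemma score_bound_le:
  assumes "nonneg_ext (pair_idx n D S) \<alpha>"
  shows "score_bound \<alpha> k \<le> L2_set \<alpha> (pair_idx n D S) * column_bound k"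
proof -
  have "score_bound \<alpha> k \<le> (\<Sum>q\<in>pair_idx n D S. \<bar>\<alpha> q\<bar> * \<bar>pair_max_sq k q\<bar>)"
    unfolding score_bound_eq using assms by (intro sum_mono) (auto simp: nonneg_ext_def)
  also have "\<dots> \<le> L2_set \<alpha> (pair_idx n D S) * column_bound k"
    unfolding column_bound_eq by (rule L2_set_mult_ineq)
  finally show ?thesis .
qed

lemma Ccol_descendant_le:
  assumes "q \<in> pair_idx n D S" and desc: "\<And>i. i \<in> {1..n} \<Longrightarrow> 0 \<le> x i k' \<and> x i k' \<le> x i k"
  shows "\<bar>Ccol x q k'\<bar> \<le> pair_max_sq k q" and "Ccol x q k' \<le> (if fst q then pair_max_sq k q else 0)"
proof -
  obtain b i j where q: "q = (b, i, j)" "i \<in> {1..n}" "j \<in> {1..n}"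
    using assms(1) by (rule pair_idxE)
  have "\<bar>x i k' - x j k'\<bar> \<le> max (x i k) (x j k)" using desc[OF q(2)] desc[OF q(3)] by auto
  then have "\<bar>x i k' - x j k'\<bar>\<^sup>2 \<le> (max (x i k) (x j k))\<^sup>2" by (rule power_mono) simp
  then have "cvec x i j k' \<le> pair_max_sq k q"
    by (simp add: cvec_def pair_max_sq_def q(1) power2_eq_square)
  moreover have "0 \<le> cvec x i j k'" by (simp add: cvec_def)
  ultimately show "\<bar>Ccol x q k'\<bar> \<le> pair_max_sq k q" "Ccol x q k' \<le> (if fst q then pair_max_sq k q else 0)"
    by (auto simp: Ccol_def q(1))
qed

lemma C_mul_descendant_le:
  assumes "nonneg_ext (pair_idx n D S) \<alpha>" and "\<And>i. i \<in> {1..n} \<Longrightarrow> 0 \<le> x i k' \<and> x i k' \<le> x i k"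
  shows "C_mul \<alpha> k' \<le> score_bound \<alpha> k"
  unfolding C_mul_def score_bound_eq
proof (rule sum_mono)
  fix q assume q: "q \<in> pair_idx n D S"
  have "Ccol x q k' * \<alpha> q \<le> (if fst q then pair_max_sq k q else 0) * \<alpha> q"
    using Ccol_descendant_le(2)[OF q assms(2)] nonneg_ext_nonneg[OF assms(1) q] by (rule mult_right_mono)
  then show "Ccol x q k' * \<alpha> q \<le> (if fst q then \<alpha> q * pair_max_sq k q else 0)"
    by (simp add: mult.commute split: if_splits)
qed

lemma L2_set_Ccol_descendant_le:
  assumes "\<And>i. i \<in> {1..n} \<Longrightarrow> 0 \<le> x i k' \<and> x i k' \<le> x i k"
  shows "L2_set (\<lambda>q. Ccol x q k') (pair_idx n D S) \<le> column_bound k"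
proof -
  have "L2_set (\<lambda>q. Ccol x q k') (pair_idx n D S) = L2_set (\<lambda>q. \<bar>Ccol x q k'\<bar>) (pair_idx n D S)"
    unfolding L2_set_def by simp
  also have "\<dots> \<le> column_bound k"
    unfolding column_bound_eq using Ccol_descendant_le(1)[OF _ assms] by (intro L2_set_mono) auto
  finally show ?thesis .
qed

end

theorem theorem7:
  fixes n K p :: nat and x :: "nat \<Rightarrow> nat \<Rightarrow> real" and D S :: "nat \<Rightarrow> nat set"
    and L U \<eta> lam lam0 \<epsilon> :: real
    and \<alpha>0 \<alpha>0s :: "bool \<times> nat \<times> nat \<Rightarrow> real" and ms :: "nat \<Rightarrow> real"
    and desc :: "nat \<Rightarrow> nat \<Rightarrow> bool" and k :: nat
  assumes "1 \<le> n" "1 \<le> K" "1 \<le> p"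
    and x_nonneg: "\<And>i k. i \<in> {1..n} \<Longrightarrow> k \<in> {1..p} \<Longrightarrow> 0 \<le> x i k"
    and D_sub: "\<And>i. i \<in> {1..n} \<Longrightarrow> D i \<subseteq> {1..n} \<and> card (D i) = K"
    and S_sub: "\<And>i. i \<in> {1..n} \<Longrightarrow> S i \<subseteq> {1..n} \<and> card (S i) = K"
    and "U \<le> L" "0 \<le> U" "0 < \<eta>"
    and desc_dom: "\<And>k1 k2. desc k1 k2 \<Longrightarrow> k1 \<in> {1..p} \<and> k2 \<in> {1..p}"
    and desc_mono: "\<And>k1 k2 i. desc k1 k2 \<Longrightarrow> i \<in> {1..n} \<Longrightarrow> 0 \<le> x i k1 \<and> x i k1 \<le> x i k2"
    and "0 < lam" "lam \<le> lam0"
    and dual_opt: "dual_feasible n D S \<alpha>0s"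
      "\<And>\<alpha>. dual_feasible n D S \<alpha> \<Longrightarrow> Dobj n p x D S L U \<eta> lam0 \<alpha> \<le> Dobj n p x D S L U \<eta> lam0 \<alpha>0s"
    and "dual_feasible n D S \<alpha>0" "0 \<le> \<epsilon>"
    and "dnorm n D S (\<lambda>q. \<alpha>0 q - \<alpha>0s q) \<le> \<epsilon>"
    and primal_opt: "primal_feasible p ms"
      "\<And>m. primal_feasible p m \<Longrightarrow> Pobj n p x D S L U \<eta> lam ms \<le> Pobj n p x D S L U \<eta> lam m"
    and "k \<in> {1..p}"
    and "let a = (\<Sum>i\<in>{1..n}. \<Sum>l\<in>D i. \<alpha>0 (True, i, l) * (max (x l k) (x i k))\<^sup>2);
             b = sqrt (\<Sum>i\<in>{1..n}. (\<Sum>l\<in>D i. (max (x i k) (x l k)) ^ 4) + (\<Sum>j\<in>S i. (max (x i k) (x j k)) ^ 4));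
             lama = lam0 * (2 * \<epsilon> * b + dnorm n D S \<alpha>0 * b + a) / (2 * lam0 + dnorm n D S \<alpha>0 * b - a)
         in lama \<le> lam"
  shows "\<forall>k'. desc k' k \<longrightarrow> ms k' = 0"
proof -
  interpret metric_learning_problem n p x D S L U \<eta>
    using D_sub S_sub \<open>0 < \<eta>\<close> by unfold_locales auto
  have dual_optimal: "nonneg_ext (pair_idx n D S) \<alpha>0s"
      "\<And>\<alpha>. nonneg_ext (pair_idx n D S) \<alpha> \<Longrightarrow> dual_obj lam0 \<alpha> \<le> dual_obj lam0 \<alpha>0s"
    using dual_opt unfolding dual_feasible_eq Dobj_eq_dual_obj by auto
  have primal_optimal: "nonneg_ext {1..p} ms" "\<And>m. nonneg_ext {1..p} m \<Longrightarrow> primal_obj lam ms \<le> primal_obj lam m"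
    using primal_opt unfolding primal_feasible_eq Pobj_eq_primal_obj by auto
  have \<alpha>0: "nonneg_ext (pair_idx n D S) \<alpha>0"
    using \<open>dual_feasible n D S \<alpha>0\<close> unfolding dual_feasible_eq .
  have close: "L2_set (\<lambda>q. \<alpha>0 q - \<alpha>0s q) (pair_idx n D S) \<le> \<epsilon>"
    using \<open>dnorm n D S (\<lambda>q. \<alpha>0 q - \<alpha>0s q) \<le> \<epsilon>\<close> unfolding dnorm_eq_L2_set .
  define N where "N = L2_set \<alpha>0 (pair_idx n D S)"
  have "0 < 2 * lam0 + N * column_bound k - score_bound \<alpha>0 k"
    using score_bound_le[OF \<alpha>0, of k] \<open>0 < lam\<close> \<open>lam \<le> lam0\<close> unfolding N_def by linarith
  moreover have "lam0 * (2 * \<epsilon> * column_bound k + N * column_bound k + score_bound \<alpha>0 k)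
      / (2 * lam0 + N * column_bound k - score_bound \<alpha>0 k) \<le> lam"
    using assms(22) unfolding Let_def score_bound_def column_bound_def N_def dnorm_eq_L2_set .
  ultimately have test: "lam0 * (2 * \<epsilon> * column_bound k + N * column_bound k + score_bound \<alpha>0 k)
      \<le> lam * (2 * lam0 + N * column_bound k - score_bound \<alpha>0 k)"
    by (simp add: pos_divide_le_eq)
  show ?thesis
  proof (intro allI impI)
    fix k' assume "desc k' k"
    then show "ms k' = 0"
      using screening_rule[OF \<open>0 < lam\<close> \<open>lam \<le> lam0\<close> dual_optimal primal_optimal close _
          C_mul_descendant_le[OF \<alpha>0 desc_mono] L2_set_Ccol_descendant_le[OF desc_mono] test[unfolded N_def]]
        desc_dom by blast
  qed
qed

end
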